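(* Let $p\in[1,\infty]$ with conjugate $p^*$, $\gamma_{\{1\}}\ge0$, and let $\mathrm{QMC}^{\mathrm{MP}}_{1,n}(f)=\frac1n\sum_{j=1}^nf\big(\frac{2j-1}{2n}\big)$ be the composite midpoint rule. Then \[\mathrm{error}(\mathrm{QMC}^{\mathrm{MP}}_{1,n};\mathcal{F}_1)=\frac{\gamma_{\{1\}}}{2(p^*+1)^{1/p^*}n},\] with the convention $(p^*+1)^{1/p^*}=1$ for $p^*=\infty$. Moreover, \[\mathrm{error}(\mathrm{QMC}^{\mathrm{MP}}_{1,n};\mathcal{F}_1)=\min\{\mathrm{error}(\mathrm{QMC}_{1,k};\mathcal{F}_1): k\le n,\ \mathrm{QMC}_{1,k}\text{ a QMC rule with }k\text{ nodes in }[0,1]\}.\]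
   Context: $1/p+1/p^*=1$. $K(x,t)=t$ if $x\ge t$ and $t-1$ if $x<t$. The one-dimensional weighted ANOVA space $\mathcal{F}_1=\mathcal{F}_{1,p,\boldsymbol\gamma}$ with weights $\gamma_\emptyset,\gamma_{\{1\}}\ge0$ consists of the functions $f=f_\emptyset+f_{\{1\}}$, where $f_\emptyset$ is a constant (present only if $\gamma_\emptyset>0$) and $f_{\{1\}}(x)=\int_0^1h(t)K(x,t)\,\mathrm{d}t$ with $h\in L_p([0,1])$ (present only if $\gamma_{\{1\}}>0$), normed by $(\gamma_\emptyset^{-p}|f_\emptyset|^p+\gamma_{\{1\}}^{-p}\|h\|_{L_p}^p)^{1/p}$ (max version for $p=\infty$; terms with zero weight omitted). A QMC rule with $k$ nodes $x_1,\dots,x_k\in[0,1]$ is $\mathrm{QMC}_{1,k}(f)=\frac1k\sum_{j=1}^kf(x_j)$; worst case error $\mathrm{error}(\mathrm{QMC}_{1,k};\mathcal{F}_1)=\sup_{\|f\|_{\mathcal{F}_1}\le1}|\int_0^1f-\mathrm{QMC}_{1,k}(f)|$. *)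

theory Defs
  imports "HOL-Analysis.Analysis"
begin

definition K :: "real \<Rightarrow> real \<Rightarrow> real" where
  "K x t = (if x \<ge> t then t else t - 1)"

definition f1_of :: "(real \<Rightarrow> real) \<Rightarrow> real \<Rightarrow> real" where
  "f1_of h x = integral\<^sup>L (lebesgue_on {0..1}) (\<lambda>t. h t * K x t)"

definition conj_exp :: "ereal \<Rightarrow> ereal" where
  "conj_exp p = (if p = 1 then \<infinity> else if p = \<infinity> then 1 else p / (p - 1))"

text \<open>Weighted term gamma^{-p} a of the p-th power of the norm (finite p);
  a term with zero weight is omitted, i.e. the component must vanish.\<close>
definition wterm :: "real \<Rightarrow> real \<Rightarrow> ennreal \<Rightarrow> ennreal" where
  "wterm p \<gamma> a = (if \<gamma> = 0 then (if a = 0 then 0 else top) else ennreal (\<gamma> powr (-p)) * a)"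

text \<open>Unit ball of the weighted space F_{1,p,gamma}: functions f = c + f_{1}
  with h in L_p([0,1]) and norm at most 1.  For finite p, the condition
  norm <= 1 is written as (norm)^p <= 1; for p = infinity as the max version.\<close>
definition unit_ball :: "ereal \<Rightarrow> real \<Rightarrow> real \<Rightarrow> (real \<Rightarrow> real) set" where
  "unit_ball p g0 g1 = {f. \<exists>c h. h \<in> borel_measurable (lebesgue_on {0..1}) \<and>
      f = (\<lambda>x. c + f1_of h x) \<and>
      (if p = \<infinity> then \<bar>c\<bar> \<le> g0 \<and> (AE t in lebesgue_on {0..1}. \<bar>h t\<bar> \<le> g1)
       else wterm (real_of_ereal p) g0 (ennreal (\<bar>c\<bar> powr real_of_ereal p))
          + wterm (real_of_ereal p) g1
              (\<integral>\<^sup>+ t. ennreal (\<bar>h t\<bar> powr real_of_ereal p) \<partial>lebesgue_on {0..1}) \<le> 1)}"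

definition QMC :: "nat \<Rightarrow> (nat \<Rightarrow> real) \<Rightarrow> (real \<Rightarrow> real) \<Rightarrow> real" where
  "QMC k x f = (1 / real k) * (\<Sum>j = 1..k. f (x j))"

definition qmc_error :: "ereal \<Rightarrow> real \<Rightarrow> real \<Rightarrow> nat \<Rightarrow> (nat \<Rightarrow> real) \<Rightarrow> ereal" where
  "qmc_error p g0 g1 k x =
     (SUP f \<in> unit_ball p g0 g1. ereal \<bar>integral\<^sup>L (lebesgue_on {0..1}) f - QMC k x f\<bar>)"

definition mp_nodes :: "nat \<Rightarrow> nat \<Rightarrow> real" where
  "mp_nodes n j = (2 * real j - 1) / (2 * real n)"

definition mp_const :: "ereal \<Rightarrow> real" where
  "mp_const p = (if conj_exp p = \<infinity> then 1
     else (real_of_ereal (conj_exp p) + 1) powr (1 / real_of_ereal (conj_exp p)))"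

end

theory Submission
  imports Defs "HOL-Real_Asymp.Real_Asymp"
begin

text \<open>Write \<open>f = c + \<integral> h(t) K(\<cdot>,t) dt\<close>. The constant is integrated exactly and, by Fubini,
  \<open>\<integral>f - QMC(f) = - \<integral> h D\<close> with \<open>D(t) = (1/k) \<Sum>\<^sub>j K(x\<^sub>j,t) = t - #{j. x\<^sub>j < t}/k\<close>.
  Since \<open>k D(t)\<close> differs from \<open>k t\<close> by an integer, \<open>\<bar>D(t)\<bar>\<close> is at least the distance from \<open>t\<close>
  to \<open>\<int>/k\<close>, with equality everywhere for the midpoint nodes. Hence the error of the midpoint rule
  is bounded by Hoelder's inequality against this sawtooth, whose \<open>L\<^sub>p\<^sub>*\<close> norm is
  \<open>1 / (2 (p\<^sup>* + 1)\<^bsup>1/p\<^sup>*\<^esup> k)\<close>, while testing an arbitrary rule with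
  \<open>h = sgn(D) \<cdot> dist(\<cdot>, \<int>/k)\<^bsup>p\<^sup>* - 1\<^esup>\<close> (a limit of such functions for \<open>p = 1\<close>) shows that
  no rule with \<open>k\<close> nodes, wherever they lie, does better. The bound decreases in \<open>k\<close>.\<close>

abbreviation M01 :: "real measure" where
  "M01 \<equiv> lebesgue_on {0..1}"

interpretation M01: finite_measure M01
  by (rule finite_measure_lebesgue_on) auto

interpretation M01_pair: pair_sigma_finite M01 M01
  by unfold_locales

lemma measure_M01_space: "measure M01 {0..1} = 1"
  by (simp add: measure_restrict_space)

lemma id_borel_measurable_M01 [measurable]: "(\<lambda>x. x) \<in> borel_measurable M01"
  by (rule continuous_imp_measurable_on_sets_lebesgue) (auto intro: continuous_on_id)

lemma fst_borel_measurable_M01 [measurable]: "fst \<in> borel_measurable (M01 \<Otimes>\<^sub>M M01)"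
  using measurable_compose[OF measurable_fst id_borel_measurable_M01] by simp

lemma snd_borel_measurable_M01 [measurable]: "snd \<in> borel_measurable (M01 \<Otimes>\<^sub>M M01)"
  using measurable_compose[OF measurable_snd id_borel_measurable_M01] by simp

lemma K_borel_measurable [measurable]:
  "K a \<in> borel_measurable M01" "(\<lambda>x. K x t) \<in> borel_measurable M01"
  unfolding K_def by measurable measurable

lemma abs_K_le: "t \<in> {0..1} \<Longrightarrow> \<bar>K x t\<bar> \<le> 1"
  by (auto simp: K_def)

lemma integrable_bounded_M01:
  assumes "f \<in> borel_measurable M01" "\<And>t. t \<in> {0..1} \<Longrightarrow> \<bar>f t\<bar> \<le> B"
  shows "integrable M01 (f :: real \<Rightarrow> real)"
  by (rule M01.integrable_const_bound[where B=B]) (use assms in auto)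

lemma integrable_mult_K:
  assumes "integrable M01 h"
  shows "integrable M01 (\<lambda>t. h t * K x t)"
proof (rule Bochner_Integration.integrable_bound[OF assms])
  have [measurable]: "h \<in> borel_measurable M01"
    using assms by (rule borel_measurable_integrable)
  show "(\<lambda>t. h t * K x t) \<in> borel_measurable M01"
    by measurable
  show "AE t in M01. norm (h t * K x t) \<le> norm (h t)"
    by (intro AE_I2) (auto simp: abs_mult intro!: mult_left_le abs_K_le)
qed

lemma integral_K_eq_0:
  assumes t: "t \<in> {0..1}"
  shows "(\<integral>x. K x t \<partial>M01) = 0"
proof -
  have "{0..<t} \<inter> {0..1} = {0..<t}"
    using t by auto
  have ind: "integrable M01 (indicator {0..<t} :: real \<Rightarrow> real)"
    using t by (intro integrable_real_indicator)
      (auto simp: sets_restrict_space_iff M01.emeasure_real less_top[symmetric])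
  have "(\<integral>x. K x t \<partial>M01) = (\<integral>x. t - indicator {0..<t} x \<partial>M01)"
    by (rule Bochner_Integration.integral_cong) (auto simp: K_def indicator_def)
  also have "\<dots> = t - measure M01 {0..<t}"
    by (subst Bochner_Integration.integral_diff[OF _ ind])
      (auto simp: measure_M01_space \<open>{0..<t} \<inter> {0..1} = {0..<t}\<close>)
  also have "measure M01 {0..<t} = t"
    using t \<open>{0..<t} \<inter> {0..1} = {0..<t}\<close> by (subst measure_restrict_space) auto
  finally show ?thesis by simp
qed

lemma
  assumes hm [measurable]: "h \<in> borel_measurable M01" and h: "integrable M01 h"
  shows integrable_f1_of: "integrable M01 (f1_of h)"
    and integral_f1_of: "integral\<^sup>L M01 (f1_of h) = 0"
proof -
  have [measurable]: "(\<lambda>z. h (fst z)) \<in> borel_measurable (M01 \<Otimes>\<^sub>M M01)"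
    by (rule measurable_compose[OF measurable_fst hm])
  let ?F = "\<lambda>(t, x). h t * K x t"
  have Fm: "?F \<in> borel_measurable (M01 \<Otimes>\<^sub>M M01)"
    unfolding split_beta K_def by measurable
  have "integrable (M01 \<Otimes>\<^sub>M M01) ?F"
  proof (rule M01_pair.Fubini_integrable[OF Fm])
    have "(\<integral>x. norm (?F (t, x)) \<partial>M01) \<le> \<bar>h t\<bar>" if "t \<in> {0..1}" for t
    proof -
      have "(\<integral>x. norm (?F (t, x)) \<partial>M01) \<le> (\<integral>x. \<bar>h t\<bar> \<partial>M01)"
        using that
        by (intro integral_mono integrable_bounded_M01[where B="\<bar>h t\<bar>"])
           (auto simp: abs_mult intro!: mult_left_le abs_K_le)
      then show ?thesis by (simp add: measure_M01_space)
    qed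
    moreover have "(\<lambda>t. \<integral>x. norm (?F (t, x)) \<partial>M01) \<in> borel_measurable M01"
      using Fm by measurable
    ultimately show "integrable M01 (\<lambda>t. \<integral>x. norm (?F (t, x)) \<partial>M01)"
      by (intro Bochner_Integration.integrable_bound[OF h]) (auto intro!: AE_I2)
    show "AE t in M01. integrable M01 (\<lambda>x. ?F (t, x))"
      by (intro AE_I2 integrable_bounded_M01[where B="\<bar>h t\<bar>" for t])
         (auto simp: abs_mult intro!: mult_left_le abs_K_le)
  qed
  note F = this
  show "integrable M01 (f1_of h)"
    unfolding f1_of_def using M01_pair.integrable_snd[OF F] by simp
  have "(\<integral>t. (\<integral>x. h t * K x t \<partial>M01) \<partial>M01) = (\<integral>t. 0 \<partial>M01)"
    by (rule Bochner_Integration.integral_cong) (auto simp: integral_K_eq_0)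
  then show "integral\<^sup>L M01 (f1_of h) = 0"
    unfolding f1_of_def using M01_pair.integral_fst[OF F] M01_pair.integral_snd[OF F] by simp
qed

definition discrepancy :: "nat \<Rightarrow> (nat \<Rightarrow> real) \<Rightarrow> real \<Rightarrow> real" where
  "discrepancy k x t = (1 / real k) * (\<Sum>j = 1..k. K (x j) t)"

lemma discrepancy_borel_measurable [measurable]: "discrepancy k x \<in> borel_measurable M01"
  unfolding discrepancy_def by measurable

lemma abs_discrepancy_le:
  assumes "t \<in> {0..1}"
  shows "\<bar>discrepancy k x t\<bar> \<le> 1"
proof -
  have "\<bar>\<Sum>j = 1..k. K (x j) t\<bar> \<le> (\<Sum>j = 1..k. 1)"
    by (rule order_trans[OF sum_abs sum_mono]) (use assms abs_K_le in auto)
  then show ?thesis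
    by (cases "k = 0") (auto simp: discrepancy_def abs_mult divide_le_eq)
qed

lemma discrepancy_eq:
  "discrepancy k x t = (real k * t - real (card {j \<in> {1..k}. x j < t})) / real k"
proof -
  have "(\<Sum>j = 1..k. K (x j) t) = (\<Sum>j = 1..k. t - of_bool (x j < t))"
    by (rule sum.cong) (auto simp: K_def)
  also have "\<dots> = real k * t - real (card {j \<in> {1..k}. x j < t})"
    by (simp add: sum_subtractf sum.If_cases Int_def)
  finally show ?thesis
    by (simp add: discrepancy_def)
qed

lemma integrable_mult_discrepancy:
  assumes "integrable M01 h"
  shows "integrable M01 (\<lambda>t. h t * discrepancy k x t)"
proof (rule Bochner_Integration.integrable_bound[OF assms])
  have [measurable]: "h \<in> borel_measurable M01"
    using assms by (rule borel_measurable_integrable)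
  show "(\<lambda>t. h t * discrepancy k x t) \<in> borel_measurable M01"
    by measurable
  show "AE t in M01. norm (h t * discrepancy k x t) \<le> norm (h t)"
    by (intro AE_I2) (auto simp: abs_mult intro!: mult_left_le abs_discrepancy_le)
qed

lemma integral_minus_QMC_eq:
  assumes hm [measurable]: "h \<in> borel_measurable M01" and h: "integrable M01 h" and k: "k \<ge> 1"
  shows "integral\<^sup>L M01 (\<lambda>y. c + f1_of h y) - QMC k x (\<lambda>y. c + f1_of h y)
          = - (\<integral>t. h t * discrepancy k x t \<partial>M01)"
proof -
  have "integral\<^sup>L M01 (\<lambda>y. c + f1_of h y) = c"
    using integrable_f1_of[OF hm h] integral_f1_of[OF hm h] by (simp add: measure_M01_space)
  moreover have "(\<integral>t. h t * discrepancy k x t \<partial>M01)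
      = (1 / real k) * (\<Sum>j = 1..k. \<integral>t. h t * K (x j) t \<partial>M01)"
    unfolding discrepancy_def
    by (simp add: sum_distrib_left mult.left_commute integrable_mult_K[OF h] Bochner_Integration.integral_sum)
  ultimately show ?thesis
    using k by (simp add: QMC_def f1_of_def sum.distrib field_simps)
qed

definition grid_dist :: "nat \<Rightarrow> real \<Rightarrow> real" where
  "grid_dist k t = \<bar>real k * t - of_int (round (real k * t))\<bar> / real k"

lemma grid_dist_nonneg: "grid_dist k t \<ge> 0"
  by (simp add: grid_dist_def)

lemma abs_sub_round_le: "\<bar>z - of_int (round z)\<bar> \<le> 1 / 2"
  unfolding abs_le_iff using of_int_round_le[of z] of_int_round_ge[of z] by linarith

lemma grid_dist_le: "grid_dist k t \<le> 1 / (2 * real k)"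
  using abs_sub_round_le[of "real k * t"] by (cases "k = 0") (auto simp: grid_dist_def field_simps)

lemma grid_dist_le_one:
  assumes "k \<ge> 1"
  shows "grid_dist k t \<le> 1"
proof -
  have "1 / (2 * real k) \<le> 1"
    using assms by (simp add: field_simps)
  with grid_dist_le show ?thesis
    by (rule order_trans)
qed

lemma grid_dist_borel_measurable [measurable]: "grid_dist k \<in> borel_measurable M01"
proof -
  have "(\<lambda>t. real_of_int \<lfloor>real k * t + 1 / 2\<rfloor>) \<in> borel_measurable M01"
    by (rule measurable_compose[OF _ borel_measurable_real_floor]) measurable
  then show ?thesis
    unfolding grid_dist_def round_def by measurable
qed

lemma abs_sub_round_eq:
  fixes z :: real
  assumes "\<bar>z - of_int m\<bar> \<le> 1 / 2"
  shows "\<bar>z - of_int (round z)\<bar> = \<bar>z - of_int m\<bar>"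
proof (cases "round z = m")
  case False
  then have "1 \<le> \<bar>m - round z\<bar>"
    by linarith
  then have "(1::real) \<le> \<bar>of_int m - of_int (round z)\<bar>"
    by (metis of_int_1_le_iff of_int_abs of_int_diff)
  then have "\<bar>z - of_int (round z)\<bar> \<ge> \<bar>z - of_int m\<bar>"
    using assms abs_sub_round_le[of z] by linarith
  with round_diff_minimal[of z m] show ?thesis
    by linarith
qed simp

lemma grid_dist_le_abs_discrepancy:
  assumes "k \<ge> 1"
  shows "grid_dist k t \<le> \<bar>discrepancy k x t\<bar>"
  using round_diff_minimal[of "real k * t" "int (card {j \<in> {1..k}. x j < t})"] assms
  by (simp add: grid_dist_def discrepancy_eq divide_right_mono)

lemma abs_discrepancy_mp_nodes:
  assumes n: "n \<ge> 1" and t: "t \<in> {0..1}"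
  shows "\<bar>discrepancy n (mp_nodes n) t\<bar> = grid_dist n t"
proof -
  define u where "u = real n * t + 1 / 2"
  define N where "N = nat \<lceil>u\<rceil> - 1"
  have u: "0 < u" "u \<le> real n + 1 / 2"
    using t n by (auto simp: u_def mult_left_le add_nonneg_pos)
  have "1 \<le> nat \<lceil>u\<rceil>"
    using u(1) by (simp add: le_nat_iff)
  then have "real N = of_int \<lceil>u\<rceil> - 1"
    by (simp add: N_def of_nat_diff)
  then have N: "real N < u" "u \<le> real N + 1"
    using ceiling_correct[of u] by auto
  have less_iff: "mp_nodes n j < t \<longleftrightarrow> real j < u" for j
    using n by (auto simp: mp_nodes_def u_def divide_less_eq algebra_simps)
  have "{j \<in> {1..n}. mp_nodes n j < t} = {1..N}"
    using N u by (auto simp: less_iff)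
  then have "\<bar>discrepancy n (mp_nodes n) t\<bar> = \<bar>real n * t - of_int (int N)\<bar> / real n"
    by (simp add: discrepancy_eq abs_divide)
  moreover have "\<bar>real n * t - of_int (int N)\<bar> \<le> 1 / 2"
    using N unfolding u_def abs_le_iff by linarith
  ultimately show ?thesis
    unfolding grid_dist_def by (simp only: abs_sub_round_eq)
qed

lemma has_integral_powr_sub_left:
  fixes a b r :: real
  assumes r: "r > 0" and ab: "a \<le> b"
  shows "((\<lambda>t. (t - a) powr r) has_integral (b - a) powr (r + 1) / (r + 1)) {a..b}"
proof -
  let ?F = "\<lambda>t. (t - a) powr (r + 1) / (r + 1)"
  have "((\<lambda>t. (t - a) powr r) has_integral ?F b - ?F a) {a..b}"
  proof (rule fundamental_theorem_of_calculus_interior_strong[where S="{}"])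
    show "continuous_on {a..b} ?F"
      using r by (intro continuous_intros continuous_on_powr') auto
    fix x assume x: "x \<in> {a<..<b} - {}"
    have "((\<lambda>t. (t - a) powr (r + 1)) has_real_derivative (r + 1) * (x - a) powr (r + 1 - of_nat 1) * 1) (at x)"
      by (rule DERIV_fun_powr) (use x in \<open>auto intro!: derivative_eq_intros\<close>)
    then show "(?F has_vector_derivative (x - a) powr r) (at x)"
      using r x by (auto intro!: derivative_eq_intros simp: has_real_derivative_iff_has_vector_derivative[symmetric])
  qed (use ab in auto)
  then show ?thesis
    by simp
qed

lemma has_integral_powr_sub_right:
  fixes a b r :: real
  assumes r: "r > 0" and ab: "a \<le> b"
  shows "((\<lambda>t. (b - t) powr r) has_integral (b - a) powr (r + 1) / (r + 1)) {a..b}"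
proof -
  let ?F = "\<lambda>t. - ((b - t) powr (r + 1) / (r + 1))"
  have "((\<lambda>t. (b - t) powr r) has_integral ?F b - ?F a) {a..b}"
  proof (rule fundamental_theorem_of_calculus_interior_strong[where S="{}"])
    show "continuous_on {a..b} ?F"
      using r by (intro continuous_intros continuous_on_powr') auto
    fix x assume x: "x \<in> {a<..<b} - {}"
    have "((\<lambda>t. (b - t) powr (r + 1)) has_real_derivative (r + 1) * (b - x) powr (r + 1 - of_nat 1) * (- 1)) (at x)"
      by (rule DERIV_fun_powr) (use x in \<open>auto intro!: derivative_eq_intros\<close>)
    then show "(?F has_vector_derivative (b - x) powr r) (at x)"
      using r x by (auto intro!: derivative_eq_intros simp: has_real_derivative_iff_has_vector_derivative[symmetric])
  qed (use ab in auto)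
  then show ?thesis
    by simp
qed

lemma grid_dist_eq_left:
  assumes k: "k \<ge> 1" and t: "real i / real k \<le> t" "t \<le> real i / real k + 1 / (2 * real k)"
  shows "grid_dist k t = t - real i / real k"
proof -
  have z: "real i \<le> real k * t" "real k * t \<le> real i + 1 / 2"
    using t k by (auto simp: field_simps)
  then have "\<bar>real k * t - of_int (int i)\<bar> \<le> 1 / 2"
    by simp
  from abs_sub_round_eq[OF this] z k show ?thesis
    by (simp add: grid_dist_def field_simps)
qed

lemma grid_dist_eq_right:
  assumes k: "k \<ge> 1" and t: "real i / real k + 1 / (2 * real k) \<le> t" "t \<le> (real i + 1) / real k"
  shows "grid_dist k t = (real i + 1) / real k - t"
proof -
  have z: "real i + 1 / 2 \<le> real k * t" "real k * t \<le> real i + 1"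
    using t k by (auto simp: field_simps)
  then have "\<bar>real k * t - of_int (int i + 1)\<bar> \<le> 1 / 2"
    by (simp add: abs_le_iff)
  from abs_sub_round_eq[OF this] z k show ?thesis
    by (simp add: grid_dist_def field_simps)
qed

lemma grid_dist_powr_has_integral_cell:
  assumes k: "k \<ge> 1" and r: "r > 0"
  shows "((\<lambda>t. grid_dist k t powr r) has_integral 2 * (1 / (2 * real k)) powr (r + 1) / (r + 1))
           {real i / real k..(real i + 1) / real k}"
proof -
  define a m b where "a = real i / real k" and "m = a + 1 / (2 * real k)" and "b = (real i + 1) / real k"
  have am: "m - a = 1 / (2 * real k)" and mb: "b - m = 1 / (2 * real k)"
    using k by (auto simp: a_def m_def b_def field_simps)
  moreover have "1 / (2 * real k) > 0"
    using k by simp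
  ultimately have "a \<le> m" "m \<le> b"
    by linarith+
  have left: "((\<lambda>t. grid_dist k t powr r) has_integral (1 / (2 * real k)) powr (r + 1) / (r + 1)) {a..m}"
  proof (rule has_integral_eq[OF _ has_integral_powr_sub_left[OF r \<open>a \<le> m\<close>, unfolded am]])
    fix t assume "t \<in> {a..m}"
    then show "(t - a) powr r = grid_dist k t powr r"
      using grid_dist_eq_left[OF k, of i t] by (simp add: a_def m_def)
  qed
  have right: "((\<lambda>t. grid_dist k t powr r) has_integral (1 / (2 * real k)) powr (r + 1) / (r + 1)) {m..b}"
  proof (rule has_integral_eq[OF _ has_integral_powr_sub_right[OF r \<open>m \<le> b\<close>, unfolded mb]])
    fix t assume "t \<in> {m..b}"
    then show "(b - t) powr r = grid_dist k t powr r"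
      using grid_dist_eq_right[OF k, of i t] by (simp add: b_def m_def a_def)
  qed
  from has_integral_combine[OF \<open>a \<le> m\<close> \<open>m \<le> b\<close> left right] show ?thesis
    by (simp add: a_def b_def)
qed

lemma grid_dist_powr_has_integral:
  assumes k: "k \<ge> 1" and r: "r > 0"
  shows "((\<lambda>t. grid_dist k t powr r) has_integral (1 / (2 * real k)) powr r / (r + 1)) {0..1}"
proof -
  define c where "c = 2 * (1 / (2 * real k)) powr (r + 1) / (r + 1)"
  have cells: "((\<lambda>t. grid_dist k t powr r) has_integral real m * c) {0..real m / real k}" for m
  proof (induction m)
    case (Suc m)
    have "((\<lambda>t. grid_dist k t powr r) has_integral real m * c + c) {0..(real m + 1) / real k}"
      by (rule has_integral_combine[OF _ _ Suc grid_dist_powr_has_integral_cell[OF k r, of m, folded c_def]])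
         (use k in \<open>auto simp: field_simps\<close>)
    then show ?case
      by (simp add: algebra_simps)
  qed (simp add: has_integral_refl(2))
  have "(1 / (2 * real k)) powr (r + 1) = (1 / (2 * real k)) powr r * (1 / (2 * real k))"
    using k by (simp add: powr_add)
  then have "real k * c = (1 / (2 * real k)) powr r / (r + 1)"
    using k by (simp add: c_def field_simps)
  with cells[of k] k show ?thesis
    by simp
qed

lemma
  assumes k: "k \<ge> 1" and r: "r > 0"
  shows integrable_grid_dist_powr: "integrable M01 (\<lambda>t. grid_dist k t powr r)"
    and integral_grid_dist_powr: "(\<integral>t. grid_dist k t powr r \<partial>M01) = (1 / (2 * real k)) powr r / (r + 1)"
proof -
  note I = grid_dist_powr_has_integral[OF k r]
  have "(\<lambda>t. grid_dist k t powr r) absolutely_integrable_on {0..1}"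
    using I by (intro nonnegative_absolutely_integrable_1) (auto simp: has_integral_integrable)
  then show int: "integrable M01 (\<lambda>t. grid_dist k t powr r)"
    by (subst (asm) absolutely_integrable_measurable_real) auto
  show "(\<integral>t. grid_dist k t powr r \<partial>M01) = (1 / (2 * real k)) powr r / (r + 1)"
    using lebesgue_integral_eq_integral[OF int] I by (simp add: integral_unique)
qed

lemma integral_abs_mult_le_Holder:
  fixes f g :: "'a \<Rightarrow> real"
  assumes pq: "p > 1" "q > 1" "1 / p + 1 / q = 1"
    and [measurable]: "f \<in> borel_measurable M" "g \<in> borel_measurable M"
    and fp: "integrable M (\<lambda>x. \<bar>f x\<bar> powr p)" and gq: "integrable M (\<lambda>x. \<bar>g x\<bar> powr q)"
    and A: "A > 0" "(\<integral>x. \<bar>f x\<bar> powr p \<partial>M) \<le> A powr p"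
    and B: "B > 0" "(\<integral>x. \<bar>g x\<bar> powr q \<partial>M) \<le> B powr q"
  shows "(\<integral>x. \<bar>f x * g x\<bar> \<partial>M) \<le> A * B"
proof -
  define Y where "Y x = A * B * ((\<bar>f x\<bar> powr p / A powr p) / p + (\<bar>g x\<bar> powr q / B powr q) / q)" for x
  have Young: "\<bar>f x * g x\<bar> \<le> Y x" for x
  proof -
    have "(\<bar>f x\<bar> / A) * (\<bar>g x\<bar> / B) \<le> (\<bar>f x\<bar> / A) powr p / p + (\<bar>g x\<bar> / B) powr q / q"
      using pq A B by (intro Youngs_inequality) auto
    then have "A * B * ((\<bar>f x\<bar> / A) * (\<bar>g x\<bar> / B))
        \<le> A * B * ((\<bar>f x\<bar> / A) powr p / p + (\<bar>g x\<bar> / B) powr q / q)"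
      using A B by (intro mult_left_mono) auto
    then show ?thesis
      using A B by (simp add: Y_def powr_divide abs_mult)
  qed
  have Y: "integrable M Y"
    unfolding Y_def using fp gq by simp
  have "integrable M (\<lambda>x. \<bar>f x * g x\<bar>)"
  proof (rule Bochner_Integration.integrable_bound[OF Y])
    show "AE x in M. norm \<bar>f x * g x\<bar> \<le> norm (Y x)"
      using Young by (intro AE_I2) (auto intro: order_trans[OF _ abs_ge_self])
  qed measurable
  then have "(\<integral>x. \<bar>f x * g x\<bar> \<partial>M) \<le> integral\<^sup>L M Y"
    using Y Young by (intro integral_mono)
  also have "integral\<^sup>L M Y
      = A * B * (((\<integral>x. \<bar>f x\<bar> powr p \<partial>M) / A powr p) / p + ((\<integral>x. \<bar>g x\<bar> powr q \<partial>M) / B powr q) / q)"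
    unfolding Y_def using fp gq by simp
  also have "\<dots> \<le> A * B * (1 / p + 1 / q)"
    using pq A B by (intro mult_left_mono add_mono divide_right_mono) auto
  finally show ?thesis
    using pq by simp
qed

lemma (in finite_measure) integrable_of_integrable_abs_powr:
  fixes f :: "'a \<Rightarrow> real"
  assumes r: "r \<ge> 1" and [measurable]: "f \<in> borel_measurable M"
    and fr: "integrable M (\<lambda>x. \<bar>f x\<bar> powr r)"
  shows "integrable M f"
proof (rule Bochner_Integration.integrable_bound[where f="\<lambda>x. 1 + \<bar>f x\<bar> powr r"])
  show "integrable M (\<lambda>x. 1 + \<bar>f x\<bar> powr r)"
    using fr by simp
  have "\<bar>f x\<bar> \<le> 1 + \<bar>f x\<bar> powr r" for x
  proof (cases "\<bar>f x\<bar> \<le> 1")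
    case False
    then have "\<bar>f x\<bar> powr 1 \<le> \<bar>f x\<bar> powr r"
      using r by (intro powr_mono) auto
    then show ?thesis
      by simp
  qed (simp add: add_increasing2)
  then show "AE x in M. norm (f x) \<le> norm (1 + \<bar>f x\<bar> powr r)"
    by (intro AE_I2) (smt (verit) powr_ge_zero real_norm_def)
qed simp

text \<open>The \<open>h\<close>-part of the unit ball of \<open>F\<^sub>1\<close>: the ball of radius \<open>\<gamma>\<close> in \<open>L\<^sub>p([0,1])\<close>.\<close>
definition Lp_ball :: "ereal \<Rightarrow> real \<Rightarrow> (real \<Rightarrow> real) set" where
  "Lp_ball p \<gamma> = {h. if p = \<infinity> then (AE t in M01. \<bar>h t\<bar> \<le> \<gamma>)
     else (\<integral>\<^sup>+ t. ennreal (\<bar>h t\<bar> powr real_of_ereal p) \<partial>M01) \<le> ennreal (\<gamma> powr real_of_ereal p)}"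

lemma wterm_le_one_iff:
  assumes "\<gamma> \<ge> 0"
  shows "wterm r \<gamma> X \<le> 1 \<longleftrightarrow> X \<le> ennreal (\<gamma> powr r)"
proof (cases "\<gamma> = 0")
  case False
  then have inv: "ennreal (\<gamma> powr r) * ennreal (\<gamma> powr (- r)) = 1"
    using assms by (simp add: ennreal_mult'[symmetric] powr_add[symmetric])
  have "wterm r \<gamma> X \<le> 1 \<longleftrightarrow> ennreal (\<gamma> powr r) * (ennreal (\<gamma> powr (- r)) * X) \<le> ennreal (\<gamma> powr r) * 1"
    using False assms by (subst ennreal_mult_le_mult_iff) (auto simp: wterm_def)
  also have "\<dots> \<longleftrightarrow> X \<le> ennreal (\<gamma> powr r)"
    by (simp add: mult.assoc[symmetric] inv)
  finally show ?thesis .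
qed (auto simp: wterm_def top_unique)

lemma wterm_zero [simp]: "wterm r \<gamma> 0 = 0"
  by (simp add: wterm_def)

lemma mem_unit_ballE:
  assumes "f \<in> unit_ball p g0 g1" and "g1 \<ge> 0"
  obtains c h where "h \<in> borel_measurable M01" "f = (\<lambda>x. c + f1_of h x)" "h \<in> Lp_ball p g1"
proof -
  obtain c h where h: "h \<in> borel_measurable M01" "f = (\<lambda>x. c + f1_of h x)"
    and cond: "if p = \<infinity> then \<bar>c\<bar> \<le> g0 \<and> (AE t in M01. \<bar>h t\<bar> \<le> g1)
       else wterm (real_of_ereal p) g0 (ennreal (\<bar>c\<bar> powr real_of_ereal p))
          + wterm (real_of_ereal p) g1 (\<integral>\<^sup>+ t. ennreal (\<bar>h t\<bar> powr real_of_ereal p) \<partial>M01) \<le> 1"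
    using assms(1) unfolding unit_ball_def by blast
  have "h \<in> Lp_ball p g1"
    using cond assms(2) by (auto simp: Lp_ball_def wterm_le_one_iff[symmetric] intro: order_trans[OF add_increasing])
  with h that show ?thesis
    by blast
qed

lemma f1_of_mem_unit_ball:
  assumes "h \<in> borel_measurable M01" "h \<in> Lp_ball p g1" "g0 \<ge> 0" "g1 \<ge> 0"
  shows "f1_of h \<in> unit_ball p g0 g1"
  unfolding unit_ball_def mem_Collect_eq
  by (rule exI[of _ 0], rule exI[of _ h])
     (use assms in \<open>auto simp: Lp_ball_def wterm_le_one_iff\<close>)

lemma
  assumes hm [measurable]: "h \<in> borel_measurable M01" and h: "h \<in> Lp_ball (ereal r) \<gamma>"
  shows integrable_abs_powr_of_mem_Lp_ball: "integrable M01 (\<lambda>t. \<bar>h t\<bar> powr r)"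
    and integral_abs_powr_le_of_mem_Lp_ball: "(\<integral>t. \<bar>h t\<bar> powr r \<partial>M01) \<le> \<gamma> powr r"
proof -
  have le: "(\<integral>\<^sup>+ t. ennreal (\<bar>h t\<bar> powr r) \<partial>M01) \<le> ennreal (\<gamma> powr r)"
    using h by (simp add: Lp_ball_def)
  then show int: "integrable M01 (\<lambda>t. \<bar>h t\<bar> powr r)"
    by (intro integrableI_nonneg) (auto simp: le_less_trans)
  show "(\<integral>t. \<bar>h t\<bar> powr r \<partial>M01) \<le> \<gamma> powr r"
    using le nn_integral_eq_integral[OF int] by (simp add: ennreal_le_iff)
qed

lemma integrable_of_mem_Lp_ball:
  assumes p: "1 \<le> p" and hm [measurable]: "h \<in> borel_measurable M01" and h: "h \<in> Lp_ball p \<gamma>"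
  shows "integrable M01 h"
proof (cases p)
  case (real r)
  with p h show ?thesis
    by (intro M01.integrable_of_integrable_abs_powr[OF _ hm] integrable_abs_powr_of_mem_Lp_ball) auto
next
  case PInf
  with h show ?thesis
    by (intro M01.integrable_const_bound[where B=\<gamma>]) (auto simp: Lp_ball_def)
qed (use p in auto)

lemma abs_integral_discrepancy_le_qmc_error:
  assumes "h \<in> borel_measurable M01" "integrable M01 h" "h \<in> Lp_ball p g1"
    and "g0 \<ge> 0" "g1 \<ge> 0" "k \<ge> 1"
  shows "ereal \<bar>\<integral>t. h t * discrepancy k x t \<partial>M01\<bar> \<le> qmc_error p g0 g1 k x"
proof -
  have "f1_of h = (\<lambda>y. 0 + f1_of h y)"
    by simp
  then have "ereal \<bar>integral\<^sup>L M01 (\<lambda>y. 0 + f1_of h y) - QMC k x (\<lambda>y. 0 + f1_of h y)\<bar> \<le> qmc_error p g0 g1 k x"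
    unfolding qmc_error_def using f1_of_mem_unit_ball[OF assms(1,3-5)] by (intro SUP_upper) auto
  then show ?thesis
    using integral_minus_QMC_eq[OF assms(1,2,6), of 0 x] by simp
qed

lemma qmc_error_le:
  assumes "1 \<le> p" "g1 \<ge> 0" "k \<ge> 1"
    and bound: "\<And>h. h \<in> borel_measurable M01 \<Longrightarrow> integrable M01 h \<Longrightarrow> h \<in> Lp_ball p g1 \<Longrightarrow>
      \<bar>\<integral>t. h t * discrepancy k x t \<partial>M01\<bar> \<le> E"
  shows "qmc_error p g0 g1 k x \<le> ereal E"
  unfolding qmc_error_def
proof (rule SUP_least)
  fix f assume "f \<in> unit_ball p g0 g1"
  then obtain c h where hm: "h \<in> borel_measurable M01" and f: "f = (\<lambda>x. c + f1_of h x)"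
    and h: "h \<in> Lp_ball p g1"
    using assms(2) by (rule mem_unit_ballE)
  have "integrable M01 h"
    using integrable_of_mem_Lp_ball[OF assms(1) hm h] .
  then show "ereal \<bar>integral\<^sup>L M01 f - QMC k x f\<bar> \<le> ereal E"
    using integral_minus_QMC_eq[OF hm _ assms(3), of c x] bound[OF hm _ h] unfolding f by simp
qed

lemma
  assumes "k \<ge> 1"
  shows integrable_grid_dist: "integrable M01 (grid_dist k)"
    and integral_grid_dist: "integral\<^sup>L M01 (grid_dist k) = 1 / (4 * real k)"
proof -
  have eq: "(\<lambda>t. grid_dist k t powr 1) = grid_dist k"
    by (simp add: grid_dist_nonneg)
  show "integrable M01 (grid_dist k)"
    using integrable_grid_dist_powr[OF assms, of 1] by (simp only: eq)
  show "integral\<^sup>L M01 (grid_dist k) = 1 / (4 * real k)"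
    using integral_grid_dist_powr[OF assms, of 1] by (simp only: eq) simp
qed

lemma integrable_abs_mult_grid_dist:
  assumes "integrable M01 h" "k \<ge> 1"
  shows "integrable M01 (\<lambda>t. \<bar>h t\<bar> * grid_dist k t)"
proof (rule Bochner_Integration.integrable_bound[OF integrable_abs[OF assms(1)]])
  have [measurable]: "h \<in> borel_measurable M01"
    using assms(1) by (rule borel_measurable_integrable)
  show "(\<lambda>t. \<bar>h t\<bar> * grid_dist k t) \<in> borel_measurable M01"
    by measurable
  have "grid_dist k t \<le> 1" for t
    using assms(2) by (rule grid_dist_le_one)
  then show "AE t in M01. norm (\<bar>h t\<bar> * grid_dist k t) \<le> norm \<bar>h t\<bar>"
    by (intro AE_I2) (simp add: abs_mult grid_dist_nonneg mult_left_le)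
qed

lemma abs_integral_discrepancy_mp_nodes_le:
  assumes "n \<ge> 1"
  shows "\<bar>\<integral>t. h t * discrepancy n (mp_nodes n) t \<partial>M01\<bar> \<le> (\<integral>t. \<bar>h t\<bar> * grid_dist n t \<partial>M01)"
proof -
  have "\<bar>\<integral>t. h t * discrepancy n (mp_nodes n) t \<partial>M01\<bar> \<le> (\<integral>t. \<bar>h t * discrepancy n (mp_nodes n) t\<bar> \<partial>M01)"
    by (rule integral_abs_bound)
  also have "\<dots> = (\<integral>t. \<bar>h t\<bar> * grid_dist n t \<partial>M01)"
    using assms by (intro Bochner_Integration.integral_cong) (auto simp: abs_mult abs_discrepancy_mp_nodes)
  finally show ?thesis .
qed

lemma qmc_error_mp_nodes_le_PInf:
  assumes "g1 \<ge> 0" "n \<ge> 1"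
  shows "qmc_error \<infinity> g0 g1 n (mp_nodes n) \<le> ereal (g1 / (4 * real n))"
proof (rule qmc_error_le)
  fix h assume h: "integrable M01 h" "h \<in> Lp_ball \<infinity> g1"
  have "AE t in M01. \<bar>h t\<bar> \<le> g1"
    using h(2) by (simp add: Lp_ball_def)
  then have "AE t in M01. \<bar>h t\<bar> * grid_dist n t \<le> g1 * grid_dist n t"
    by eventually_elim (simp add: mult_right_mono grid_dist_nonneg)
  then have "(\<integral>t. \<bar>h t\<bar> * grid_dist n t \<partial>M01) \<le> (\<integral>t. g1 * grid_dist n t \<partial>M01)"
    using h assms integrable_grid_dist[OF assms(2)]
    by (intro integral_mono_AE integrable_abs_mult_grid_dist) auto
  also have "\<dots> = g1 / (4 * real n)"
    using integral_grid_dist[OF assms(2)] by simp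
  finally show "\<bar>\<integral>t. h t * discrepancy n (mp_nodes n) t \<partial>M01\<bar> \<le> g1 / (4 * real n)"
    using abs_integral_discrepancy_mp_nodes_le[OF assms(2), of h] by linarith
qed (use assms in auto)

lemma qmc_error_mp_nodes_le_one:
  assumes "g1 \<ge> 0" "n \<ge> 1"
  shows "qmc_error 1 g0 g1 n (mp_nodes n) \<le> ereal (g1 / (2 * real n))"
proof (rule qmc_error_le)
  fix h assume hm: "h \<in> borel_measurable M01" and h: "integrable M01 h" "h \<in> Lp_ball 1 g1"
  have "(\<integral>t. \<bar>h t\<bar> * grid_dist n t \<partial>M01) \<le> (\<integral>t. \<bar>h t\<bar> * (1 / (2 * real n)) \<partial>M01)"
    using h assms
    by (intro integral_mono integrable_abs_mult_grid_dist mult_left_mono grid_dist_le) auto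
  also have "\<dots> = (\<integral>t. \<bar>h t\<bar> powr 1 \<partial>M01) / (2 * real n)"
    by simp
  also have "\<dots> \<le> g1 / (2 * real n)"
    using integral_abs_powr_le_of_mem_Lp_ball[OF hm, of 1 g1] h assms
    by (intro divide_right_mono) (auto simp: one_ereal_def)
  finally show "\<bar>\<integral>t. h t * discrepancy n (mp_nodes n) t \<partial>M01\<bar> \<le> g1 / (2 * real n)"
    using abs_integral_discrepancy_mp_nodes_le[OF assms(2), of h] by linarith
qed (use assms in auto)

lemma qmc_error_mp_nodes_le_real:
  assumes "g1 \<ge> 0" "n \<ge> 1" and rq: "r > 1" "q > 1" "1 / r + 1 / q = 1"
  shows "qmc_error (ereal r) g0 g1 n (mp_nodes n) \<le> ereal (g1 / (2 * (q + 1) powr (1 / q) * real n))"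
proof (rule qmc_error_le)
  fix h assume hm [measurable]: "h \<in> borel_measurable M01"
    and h: "integrable M01 h" "h \<in> Lp_ball (ereal r) g1"
  define N where "N = 1 / (2 * (q + 1) powr (1 / q) * real n)"
  have "N > 0"
    using assms by (simp add: N_def)
  have "(\<integral>t. \<bar>h t\<bar> * grid_dist n t \<partial>M01) \<le> g1 * N"
  proof (cases "g1 = 0")
    case True
    then have "AE t in M01. \<bar>h t\<bar> powr r = 0"
      using integral_abs_powr_le_of_mem_Lp_ball[OF hm h(2)] integrable_abs_powr_of_mem_Lp_ball[OF hm h(2)]
      by (subst integral_nonneg_eq_0_iff_AE[symmetric]) (auto intro: antisym)
    then have "AE t in M01. \<bar>h t\<bar> * grid_dist n t = 0"
      by eventually_elim simp
    then show ?thesis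
      using True by (simp add: integral_cong_AE[where g="\<lambda>_. 0"])
  next
    case False
    have "N powr q = (1 / (2 * real n)) powr q / (q + 1)"
      using rq assms by (simp add: N_def powr_divide powr_mult powr_powr)
    then have "(\<integral>t. \<bar>grid_dist n t\<bar> powr q \<partial>M01) \<le> N powr q"
      using rq assms by (simp add: grid_dist_nonneg integral_grid_dist_powr)
    moreover have "integrable M01 (\<lambda>t. \<bar>grid_dist n t\<bar> powr q)"
      using rq assms by (simp add: grid_dist_nonneg integrable_grid_dist_powr)
    ultimately have "(\<integral>t. \<bar>h t * grid_dist n t\<bar> \<partial>M01) \<le> g1 * N"
      using False assms \<open>N > 0\<close>
      by (intro integral_abs_mult_le_Holder[OF rq hm _ integrable_abs_powr_of_mem_Lp_ball[OF hm h(2)] _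
            _ integral_abs_powr_le_of_mem_Lp_ball[OF hm h(2)]]) auto
    then show ?thesis
      by (simp add: abs_mult grid_dist_nonneg)
  qed
  then show "\<bar>\<integral>t. h t * discrepancy n (mp_nodes n) t \<partial>M01\<bar> \<le> g1 / (2 * (q + 1) powr (1 / q) * real n)"
    using abs_integral_discrepancy_mp_nodes_le[OF assms(2), of h] by (simp add: N_def)
qed (use assms in auto)

lemma mem_Lp_ball_mono:
  assumes "w \<in> Lp_ball p \<gamma>" "p \<ge> 0" "\<And>t. \<bar>h t\<bar> \<le> \<bar>w t\<bar>"
  shows "h \<in> Lp_ball p \<gamma>"
proof (cases "p = \<infinity>")
  case True
  with assms show ?thesis
    by (auto simp: Lp_ball_def elim!: AE_mp intro: order_trans)
next
  case False
  have "0 \<le> real_of_ereal p"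
    using assms(2) by (simp add: real_of_ereal_pos)
  then have "(\<integral>\<^sup>+ t. ennreal (\<bar>h t\<bar> powr real_of_ereal p) \<partial>M01)
      \<le> (\<integral>\<^sup>+ t. ennreal (\<bar>w t\<bar> powr real_of_ereal p) \<partial>M01)"
    using assms(3) by (intro nn_integral_mono ennreal_leI powr_mono2) auto
  with False assms(1) show ?thesis
    by (auto simp: Lp_ball_def)
qed

text \<open>Testing with \<open>h = w \<cdot> sgn D\<close> turns \<open>h D\<close> into \<open>w \<bar>D\<bar> \<ge> w \<cdot> grid_dist\<close>.\<close>
lemma integral_weight_grid_dist_le_qmc_error:
  assumes wm [measurable]: "w \<in> borel_measurable M01"
    and w: "\<And>t. t \<in> {0..1} \<Longrightarrow> 0 \<le> w t \<and> w t \<le> B"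
    and ball: "(\<lambda>t. w t * sgn (discrepancy k x t)) \<in> Lp_ball p g1"
    and "g0 \<ge> 0" "g1 \<ge> 0" "k \<ge> 1"
  shows "ereal (\<integral>t. w t * grid_dist k t \<partial>M01) \<le> qmc_error p g0 g1 k x"
proof -
  let ?h = "\<lambda>t. w t * sgn (discrepancy k x t)"
  have bounded: "\<bar>?h t\<bar> \<le> B" "\<bar>w t * grid_dist k t\<bar> \<le> B" if "t \<in> {0..1}" for t
    using w[OF that] grid_dist_le_one[OF assms(6), of t] grid_dist_nonneg[of k t]
    by (auto simp: abs_mult abs_sgn_eq intro: mult_left_le order_trans)
  have h: "integrable M01 ?h"
    by (rule integrable_bounded_M01[OF _ bounded(1)]) measurable
  have "(\<integral>t. w t * grid_dist k t \<partial>M01) \<le> (\<integral>t. ?h t * discrepancy k x t \<partial>M01)"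
  proof (intro integral_mono integrable_mult_discrepancy[OF h])
    show "integrable M01 (\<lambda>t. w t * grid_dist k t)"
      by (rule integrable_bounded_M01[OF _ bounded(2)]) measurable
    fix t assume "t \<in> space M01"
    then have "w t * grid_dist k t \<le> w t * \<bar>discrepancy k x t\<bar>"
      using w grid_dist_le_abs_discrepancy[OF assms(6)] by (intro mult_left_mono) auto
    then show "w t * grid_dist k t \<le> ?h t * discrepancy k x t"
      unfolding abs_sgn by (simp add: ac_simps)
  qed
  also have "\<dots> \<le> ereal \<bar>\<integral>t. ?h t * discrepancy k x t \<partial>M01\<bar>"
    by simp
  also have "\<dots> \<le> qmc_error p g0 g1 k x"
    using h ball assms(4-6) by (intro abs_integral_discrepancy_le_qmc_error) measurable
  finally show ?thesis
    by simp
qed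

lemma qmc_error_ge_PInf:
  assumes "g0 \<ge> 0" "g1 \<ge> 0" "k \<ge> 1"
  shows "ereal (g1 / (4 * real k)) \<le> qmc_error \<infinity> g0 g1 k x"
proof -
  have "(\<lambda>t. g1 * sgn (discrepancy k x t)) \<in> Lp_ball \<infinity> g1"
    using assms by (auto simp: Lp_ball_def abs_mult abs_sgn_eq)
  from integral_weight_grid_dist_le_qmc_error[where B=g1, OF _ _ this assms] assms show ?thesis
    by (simp add: integral_grid_dist)
qed

text \<open>The factor \<open>s\<close> gives \<open>w = s \<cdot> grid_dist\<^sup>a\<close> the \<open>L\<^sub>r\<close>-norm \<open>g1\<close>. For \<open>r > 1\<close> the exponent
  \<open>a = p\<^sup>* - 1\<close> gives equality in Hoelder's inequality; for \<open>r = 1\<close> the bound tends to the optimal one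
  as \<open>a \<rightarrow> \<infinity>\<close>.\<close>
lemma qmc_error_ge_real:
  assumes "g0 \<ge> 0" "g1 \<ge> 0" "k \<ge> 1" and r: "r \<ge> 1" and a: "a > 0"
  shows "ereal (g1 / (2 * real k) * ((a * r + 1) powr (1 / r) / (a + 2))) \<le> qmc_error (ereal r) g0 g1 k x"
proof -
  define c where "c = 1 / (2 * real k)"
  define s where "s = g1 * (a * r + 1) powr (1 / r) / c powr a"
  define w where "w t = s * grid_dist k t powr a" for t
  have c: "c > 0" and s: "s \<ge> 0" and ar: "a * r > 0"
    using assms by (simp_all add: c_def s_def)
  have "s powr r = g1 powr r * (a * r + 1) / c powr (a * r)"
    using assms c ar by (simp add: s_def powr_divide powr_mult powr_powr)
  then have sr: "s powr r * (c powr (a * r) / (a * r + 1)) = g1 powr r"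
    using c ar by (simp add: field_simps)
  have w_powr: "\<bar>w t\<bar> powr r = s powr r * grid_dist k t powr (a * r)" for t
    using s grid_dist_nonneg[of k t] by (simp add: w_def abs_mult powr_mult powr_powr)
  have "(\<integral>\<^sup>+ t. ennreal (\<bar>w t\<bar> powr r) \<partial>M01) = ennreal (\<integral>t. s powr r * grid_dist k t powr (a * r) \<partial>M01)"
    unfolding w_powr using integrable_grid_dist_powr[OF assms(3) ar]
    by (intro nn_integral_eq_integral) (auto simp: grid_dist_nonneg)
  also have "\<dots> = ennreal (g1 powr r)"
    using sr by (simp add: integral_grid_dist_powr[OF assms(3) ar] c_def)
  finally have "w \<in> Lp_ball (ereal r) g1"
    by (simp add: Lp_ball_def)
  then have ball: "(\<lambda>t. w t * sgn (discrepancy k x t)) \<in> Lp_ball (ereal r) g1"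
    by (rule mem_Lp_ball_mono) (use r in \<open>auto simp: abs_mult abs_sgn_eq\<close>)
  have "0 \<le> w t \<and> w t \<le> s * c powr a" for t
  proof -
    have "grid_dist k t powr a \<le> c powr a"
      using a grid_dist_nonneg grid_dist_le unfolding c_def by (intro powr_mono2) auto
    then show ?thesis
      using s by (simp add: w_def mult_left_mono)
  qed
  from integral_weight_grid_dist_le_qmc_error[OF _ this ball assms(1-3)]
  have "ereal (\<integral>t. s * grid_dist k t powr (a + 1) \<partial>M01) \<le> qmc_error (ereal r) g0 g1 k x"
    by (simp add: w_def powr_add grid_dist_nonneg mult.assoc)
  also have "(\<integral>t. s * grid_dist k t powr (a + 1) \<partial>M01) = s * (c powr (a + 1) / (a + 2))"
    using a integral_grid_dist_powr[OF assms(3), of "a + 1"] by (simp add: c_def add.assoc)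
  also have "\<dots> = g1 / (2 * real k) * ((a * r + 1) powr (1 / r) / (a + 2))"
    using c by (simp add: s_def c_def powr_add)
  finally show ?thesis .
qed

lemma qmc_error_ge_one:
  assumes "g0 \<ge> 0" "g1 \<ge> 0" "k \<ge> 1"
  shows "ereal (g1 / (2 * real k)) \<le> qmc_error 1 g0 g1 k x"
proof (rule LIMSEQ_le_const2)
  show "(\<lambda>m. ereal (g1 / (2 * real k) * ((real m + 1) / (real m + 2)))) \<longlonglongrightarrow> ereal (g1 / (2 * real k))"
    by (intro tendsto_ereal) real_asymp
  have "ereal (g1 / (2 * real k) * ((real m + 1) / (real m + 2))) \<le> qmc_error 1 g0 g1 k x" if "m \<ge> 1" for m
    using qmc_error_ge_real[OF assms order_refl, of "real m" x] that by (simp add: one_ereal_def)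
  then show "\<exists>N. \<forall>m\<ge>N. ereal (g1 / (2 * real k) * ((real m + 1) / (real m + 2))) \<le> qmc_error 1 g0 g1 k x"
    by blast
qed

lemma ereal_ge_one_cases:
  assumes "1 \<le> p"
  obtains "p = \<infinity>" | "p = 1" | r where "r > 1" "p = ereal r"
proof (cases p)
  case (real r)
  with assms that show ?thesis
    by (cases "r = 1") (auto simp: one_ereal_def)
qed (use assms that in auto)

lemma conj_exp_real:
  assumes "r > 1"
  shows "conj_exp (ereal r) = ereal (r / (r - 1))"
    and "r / (r - 1) > 1" "1 / r + 1 / (r / (r - 1)) = 1"
  using assms by (auto simp: conj_exp_def one_ereal_def field_simps)

lemma mp_const_real:
  "r > 1 \<Longrightarrow> mp_const (ereal r) = (r / (r - 1) + 1) powr (1 / (r / (r - 1)))"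
  by (simp add: mp_const_def conj_exp_real)

lemma mp_const_pos:
  assumes "1 \<le> p"
  shows "mp_const p > 0"
  using assms
proof (cases rule: ereal_ge_one_cases)
  case (3 r)
  then have "r / (r - 1) + 1 > 0"
    by (auto intro!: add_pos_pos divide_pos_pos)
  then show ?thesis
    unfolding 3 mp_const_real[OF 3(1)] powr_gt_zero by linarith
qed (simp_all add: mp_const_def conj_exp_def)

lemma qmc_error_mp_nodes_le:
  assumes "1 \<le> p" "g1 \<ge> 0" "n \<ge> 1"
  shows "qmc_error p g0 g1 n (mp_nodes n) \<le> ereal (g1 / (2 * mp_const p * real n))"
  using assms(1)
proof (cases rule: ereal_ge_one_cases)
  case 1
  with qmc_error_mp_nodes_le_PInf[OF assms(2,3)] show ?thesis
    by (simp add: mp_const_def conj_exp_def)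
next
  case 2
  with qmc_error_mp_nodes_le_one[OF assms(2,3)] show ?thesis
    by (simp add: mp_const_def conj_exp_def)
next
  case (3 r)
  with qmc_error_mp_nodes_le_real[OF assms(2,3) _ conj_exp_real(2,3)] show ?thesis
    by (simp add: mp_const_real)
qed

lemma qmc_error_ge:
  assumes "1 \<le> p" "g0 \<ge> 0" "g1 \<ge> 0" "k \<ge> 1"
  shows "ereal (g1 / (2 * mp_const p * real k)) \<le> qmc_error p g0 g1 k x"
  using assms(1)
proof (cases rule: ereal_ge_one_cases)
  case 1
  with qmc_error_ge_PInf[OF assms(2-4)] show ?thesis
    by (simp add: mp_const_def conj_exp_def)
next
  case 2
  with qmc_error_ge_one[OF assms(2-4)] show ?thesis
    by (simp add: mp_const_def conj_exp_def)
next
  case (3 r)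
  define q where "q = r / (r - 1)"
  have q: "q > 1" "1 / r = 1 - 1 / q" "(q - 1) * r + 1 = q + 1"
    using \<open>r > 1\<close> by (auto simp: q_def field_simps)
  have "mp_const p = (q + 1) powr (1 / q)"
    using 3 by (simp add: mp_const_real q_def)
  have "((q - 1) * r + 1) powr (1 / r) / (q - 1 + 2) = (q + 1) powr (1 - 1 / q) / (q + 1)"
    using q by simp
  also have "\<dots> = 1 / (q + 1) powr (1 / q)"
    using q by (simp add: powr_diff)
  finally have "g1 / (2 * real k) * (((q - 1) * r + 1) powr (1 / r) / (q - 1 + 2))
      = g1 / (2 * mp_const p * real k)"
    using \<open>mp_const p = (q + 1) powr (1 / q)\<close> by simp
  with qmc_error_ge_real[OF assms(2-4), of r "q - 1" x] q \<open>r > 1\<close> 3 show ?thesis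
    by simp
qed

theorem mainTheorem6:
  fixes p :: ereal and g0 g1 :: real and n :: nat
  assumes "1 \<le> p" and "g0 \<ge> 0" and "g1 \<ge> 0" and "n \<ge> 1"
  shows "qmc_error p g0 g1 n (mp_nodes n) = ereal (g1 / (2 * mp_const p * real n))
    \<and> (\<forall>j\<in>{1..n}. mp_nodes n j \<in> {0..1})
    \<and> (\<forall>k x. 1 \<le> k \<and> k \<le> n \<and> (\<forall>j\<in>{1..k}. x j \<in> {0..1}) \<longrightarrow>
          qmc_error p g0 g1 n (mp_nodes n) \<le> qmc_error p g0 g1 k x)"
proof -
  have error: "qmc_error p g0 g1 n (mp_nodes n) = ereal (g1 / (2 * mp_const p * real n))"
    using qmc_error_mp_nodes_le[OF assms(1,3,4)] qmc_error_ge[OF assms] by (rule antisym)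
  have nodes: "\<forall>j\<in>{1..n}. mp_nodes n j \<in> {0..1}"
    using assms(4) by (auto simp: mp_nodes_def field_simps)
  have optimal: "qmc_error p g0 g1 n (mp_nodes n) \<le> qmc_error p g0 g1 k x" if "1 \<le> k" "k \<le> n" for k x
  proof -
    have "g1 / (2 * mp_const p * real n) \<le> g1 / (2 * mp_const p * real k)"
      using mp_const_pos[OF assms(1)] assms(3) that by (intro divide_left_mono mult_mono) auto
    then have "ereal (g1 / (2 * mp_const p * real n)) \<le> ereal (g1 / (2 * mp_const p * real k))"
      by simp
    also have "\<dots> \<le> qmc_error p g0 g1 k x"
      using assms(1-3) that(1) by (rule qmc_error_ge)
    finally show ?thesis
      unfolding error .
  qed
  show ?thesis
    using error nodes optimal by blast
qed

end
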